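(* Let $a>0$, $\phi\in\mathcal D_+[0,\infty)$, and let $C^\phi$ and the times $\sigma_k,\tau_k$ be as in the context. For every $k\ge1$ and every $t\in[\sigma_{k-1},\tau_k)$, $$C^\phi(t)=\sup_{s\in[\sigma_{k-1},t]}(\phi(s)-a)^+.$$
   Context: $\mathcal D_+[0,\infty)$ is the set of nonnegative right-continuous functions $[0,\infty)\to\mathbb R$ with left limits. $x^+=\max(x,0)$, $\wedge=\min$. For $a>0$, $C^\phi(t)=\sup_{s\in[0,t]}\big[(\phi(s)-a)^+\wedge\inf_{u\in[s,t]}\phi(u)\big]$. Times: $\tau_0=0$, $\sigma_0=\min\{t\ge0:\phi(t)-a\ge0\}$, and for $k\ge1$, $\tau_k=\min\{t\ge\sigma_{k-1}:\phi(t)\le\sup_{s\in[\sigma_{k-1},t]}\phi(s)-a\}$, $\sigma_k=\min\{t\ge\tau_k:\phi(t)-a\ge\inf_{u\in[\tau_k,t]}\phi(u)\}$, with $\min\emptyset=+\infty$ (minima are attained when finite, by right-continuity). *)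

theory Defs
  imports "HOL-Analysis.Analysis"
begin

text \<open>Nonnegative cadlag functions on [0,inf); represented as functions real => real whose
  values at negative arguments are irrelevant.\<close>
definition Dplus :: "(real \<Rightarrow> real) set" where
  "Dplus = {\<phi>. (\<forall>t\<ge>0. \<phi> t \<ge> 0) \<and> (\<forall>t\<ge>0. continuous (at_right t) \<phi>)
              \<and> (\<forall>t>0. \<exists>l. (\<phi> \<longlongrightarrow> l) (at_left t))}"

definition Cphi :: "real \<Rightarrow> (real \<Rightarrow> real) \<Rightarrow> real \<Rightarrow> real" where
  "Cphi a \<phi> t = (SUP s\<in>{0..t}. min (max (\<phi> s - a) 0) (INF u\<in>{s..t}. \<phi> u))"

definition first_time :: "ereal \<Rightarrow> (real \<Rightarrow> bool) \<Rightarrow> ereal" where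
  "first_time S P = (if \<exists>t. S \<le> ereal t \<and> P t
                      then ereal (Inf {t. S \<le> ereal t \<and> P t}) else \<infinity>)"

fun stimes :: "real \<Rightarrow> (real \<Rightarrow> real) \<Rightarrow> nat \<Rightarrow> ereal \<times> ereal" where
  "stimes a \<phi> 0 = (0, first_time 0 (\<lambda>t. \<phi> t - a \<ge> 0))"
| "stimes a \<phi> (Suc k) =
    (let \<sigma> = snd (stimes a \<phi> k);
         \<tau> = first_time \<sigma> (\<lambda>t. \<phi> t \<le> (SUP s\<in>{s. \<sigma> \<le> ereal s \<and> s \<le> t}. \<phi> s) - a)
     in (\<tau>, first_time \<tau> (\<lambda>t. \<phi> t - a \<ge> (INF u\<in>{u. \<tau> \<le> ereal u \<and> u \<le> t}. \<phi> u))))"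

definition tau_time :: "real \<Rightarrow> (real \<Rightarrow> real) \<Rightarrow> nat \<Rightarrow> ereal" where
  "tau_time a \<phi> k = fst (stimes a \<phi> k)"

definition sigma_time :: "real \<Rightarrow> (real \<Rightarrow> real) \<Rightarrow> nat \<Rightarrow> ereal" where
  "sigma_time a \<phi> k = snd (stimes a \<phi> k)"

end

theory Submission
  imports Defs
begin

(* C^phi(t) is a supremum over s in [0,t] of min((phi(s) - a)^+, inf_{[s,t]} phi).  Write
   r = sigma_{k-1}.  The index range splits into two parts:
   - for s in [r,t], since t < tau_k there has been no drawdown of size a since r, so
     phi > phi(s) - a on [s,t] and the summand equals (phi(s) - a)^+;
   - for s < r, the summand is at most (phi(r) - a)^+: if k = 1 it is 0 because phi < a before
     sigma_0, and otherwise it is bounded by inf_{[tau_{k-1}, r]} phi, which by right continuity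
     is at most phi(r) - a (the hitting time sigma_{k-1} is attained). *)

(* A function into a linear order that is locally bounded above on a compact set is bounded
   above there: finitely many of the local neighbourhoods cover the set. *)
lemma bdd_above_image_compact_locally:
  fixes f :: "'a::metric_space \<Rightarrow> 'b::linorder"
  assumes "compact K"
    and local: "\<And>x. x \<in> K \<Longrightarrow> \<exists>\<delta>>0. \<exists>M. \<forall>y\<in>K. dist y x < \<delta> \<longrightarrow> f y \<le> M"
  shows "bdd_above (f ` K)"
proof -
  obtain \<delta> M where \<delta>M: "\<And>x. x \<in> K \<Longrightarrow> \<delta> x > 0 \<and> (\<forall>y\<in>K. dist y x < \<delta> x \<longrightarrow> f y \<le> M x)"
    using local by metis
  have "K \<subseteq> (\<Union>x\<in>K. ball x (\<delta> x))" using \<delta>M by force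
  then obtain D where D: "D \<subseteq> K" "finite D" "K \<subseteq> (\<Union>x\<in>D. ball x (\<delta> x))"
    using compactE_image[OF \<open>compact K\<close>, of K "\<lambda>x. ball x (\<delta> x)"] by auto
  show ?thesis
  proof (cases "D = {}")
    case True
    then show ?thesis using D(3) by auto
  next
    case False
    have "f y \<le> Max (M ` D)" if "y \<in> K" for y
    proof -
      obtain x where "x \<in> D" "dist x y < \<delta> x" using D(3) \<open>y \<in> K\<close> by auto
      then have "f y \<le> M x" using \<delta>M[of x] D(1) \<open>y \<in> K\<close> by (auto simp: dist_commute)
      also have "\<dots> \<le> Max (M ` D)" using D(2) \<open>x \<in> D\<close> by simp
      finally show ?thesis .
    qed
    then show ?thesis by (auto simp: bdd_above_def)
  qed
qed

(* A cadlag function is locally bounded above on [0,inf): right continuity controls it to the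
   right of x and the left limit (for x > 0) to the left. *)
lemma Dplus_locally_bdd_above:
  assumes "\<phi> \<in> Dplus" and "0 \<le> x"
  shows "\<exists>\<delta>>0. \<exists>M. \<forall>y\<ge>0. dist y x < \<delta> \<longrightarrow> \<phi> y \<le> M"
proof -
  have "(\<phi> \<longlongrightarrow> \<phi> x) (at_right x)"
    using assms unfolding Dplus_def by (simp add: continuous_within)
  then have "eventually (\<lambda>y. \<phi> y < \<phi> x + 1) (at_right x)"
    by (rule order_tendstoD) simp
  then have right: "eventually (\<lambda>y. 0 \<le> y \<longrightarrow> \<phi> y \<le> \<phi> x + 1) (at_right x)"
    by (simp add: eventually_mono)
  obtain L where left: "eventually (\<lambda>y. 0 \<le> y \<longrightarrow> \<phi> y \<le> L) (at_left x)"
  proof (cases "x = 0")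
    case True
    have "eventually (\<lambda>y. y < x) (at_left x)"
      by (simp add: eventually_at_filter)
    then show ?thesis using True that[of 0] by (simp add: eventually_mono)
  next
    case False
    then have "0 < x" using assms(2) by simp
    then obtain l where "(\<phi> \<longlongrightarrow> l) (at_left x)"
      using assms(1) unfolding Dplus_def by blast
    then have "eventually (\<lambda>y. \<phi> y < l + 1) (at_left x)" by (auto intro: order_tendstoD)
    then show ?thesis using that[of "l + 1"] by (simp add: eventually_mono)
  qed
  have "eventually (\<lambda>y. 0 \<le> y \<longrightarrow> \<phi> y \<le> max L (\<phi> x + 1)) (at x)"
    unfolding eventually_at_split
    by (auto intro: eventually_mono[OF left] eventually_mono[OF right])
  then obtain \<delta> where "\<delta> > 0"
    and near: "\<And>y. y \<noteq> x \<Longrightarrow> dist y x < \<delta> \<Longrightarrow> 0 \<le> y \<Longrightarrow> \<phi> y \<le> max L (\<phi> x + 1)"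
    unfolding eventually_at by auto
  have "\<phi> y \<le> max L (\<phi> x + 1)" if "0 \<le> y" "dist y x < \<delta>" for y
    using near[OF _ that(2,1)] by (cases "y = x") auto
  then show ?thesis using \<open>\<delta> > 0\<close> by blast
qed

(* Hence a cadlag function is bounded above on every compact interval [c,d] in [0,inf), so
   suprema of it over such intervals are genuine upper bounds. *)
lemma Dplus_bdd_above:
  assumes "\<phi> \<in> Dplus" and "0 \<le> c"
  shows "bdd_above (\<phi> ` {c..d})"
proof (rule bdd_above_image_compact_locally)
  fix x assume "x \<in> {c..d}"
  then have "0 \<le> x" using assms(2) by simp
  then obtain \<delta> M where "\<delta> > 0" "\<forall>y\<ge>0. dist y x < \<delta> \<longrightarrow> \<phi> y \<le> M"
    using Dplus_locally_bdd_above[OF assms(1)] by blast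
  then show "\<exists>\<delta>>0. \<exists>M. \<forall>y\<in>{c..d}. dist y x < \<delta> \<longrightarrow> \<phi> y \<le> M"
    by (intro exI[of _ \<delta>] conjI exI[of _ M]) (use assms(2) in auto)
qed simp


lemma first_time_ge:
  assumes "0 \<le> S"
  shows "S \<le> first_time S P"
proof (cases "\<exists>t. S \<le> ereal t \<and> P t")
  case True
  have "S \<le> ereal (Inf {t. S \<le> ereal t \<and> P t})"
  proof (cases S)
    case (real r)
    have "r \<le> Inf {t. S \<le> ereal t \<and> P t}"
      using True by (intro cInf_greatest) (auto simp: real)
    then show ?thesis using real by simp
  qed (use assms True in auto)
  then show ?thesis using True by (simp add: first_time_def)
qed (auto simp: first_time_def)

lemma first_time_le:
  assumes "0 \<le> S" and "S \<le> ereal u" and "P u"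
  shows "first_time S P \<le> ereal u"
proof -
  have "bdd_below {t. S \<le> ereal t \<and> P t}"
    using assms(1) by (intro bdd_belowI[of _ 0]) (auto dest: order_trans)
  then have "Inf {t. S \<le> ereal t \<and> P t} \<le> u" using assms by (intro cInf_lower) auto
  then show ?thesis using assms by (auto simp: first_time_def)
qed

lemma not_before_first_time:
  assumes "0 \<le> S" and "S \<le> ereal u" and "ereal u < first_time S P"
  shows "\<not> P u"
  using first_time_le[OF assms(1,2)] assms(3) by fastforce

(* The infimum defining a finite hitting time is attained, provided that a failure of P at a
   time r persists on a right neighbourhood of r (as is the case for conditions built from a
   right-continuous function). *)
lemma first_time_attained:
  assumes "0 \<le> S" and finite: "first_time S P = ereal r"
    and right_open: "\<not> P r \<Longrightarrow> eventually (\<lambda>u. \<not> P u) (at_right r)"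
  shows "P r"
proof (rule ccontr)
  assume "\<not> P r"
  then obtain b where "b > r" and no_hit: "\<And>u. r < u \<Longrightarrow> u < b \<Longrightarrow> \<not> P u"
    using right_open unfolding eventually_at_right_field by blast
  define A where "A = {t. S \<le> ereal t \<and> P t}"
  have "A \<noteq> {}" and r_def: "r = Inf A"
    using finite unfolding first_time_def A_def by (auto split: if_splits)
  have "r \<le> t" if "t \<in> A" for t
    using first_time_le[OF assms(1)] that finite unfolding A_def by fastforce
  then have "b \<le> t" if "t \<in> A" for t
    using that no_hit \<open>\<not> P r\<close> unfolding A_def by (metis (mono_tags) mem_Collect_eq not_le order.order_iff_strict)
  then have "b \<le> r" unfolding r_def using \<open>A \<noteq> {}\<close> by (intro cInf_greatest)
  then show False using \<open>b > r\<close> by simp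
qed

lemma sigma_time_0: "sigma_time a \<phi> 0 = first_time 0 (\<lambda>t. \<phi> t - a \<ge> 0)"
  by (simp add: sigma_time_def)

lemma tau_time_Suc:
  "tau_time a \<phi> (Suc j) = first_time (sigma_time a \<phi> j)
     (\<lambda>t. \<phi> t \<le> (SUP s\<in>{s. sigma_time a \<phi> j \<le> ereal s \<and> s \<le> t}. \<phi> s) - a)"
  by (simp add: tau_time_def sigma_time_def Let_def)

lemma sigma_time_Suc:
  "sigma_time a \<phi> (Suc j) = first_time (tau_time a \<phi> (Suc j))
     (\<lambda>t. \<phi> t - a \<ge> (INF u\<in>{u. tau_time a \<phi> (Suc j) \<le> ereal u \<and> u \<le> t}. \<phi> u))"
  by (simp add: tau_time_def sigma_time_def Let_def)

lemma stopping_times_nonneg: "0 \<le> tau_time a \<phi> n \<and> tau_time a \<phi> n \<le> sigma_time a \<phi> n"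
proof (induction n)
  case 0
  show ?case by (simp add: tau_time_def sigma_time_0 first_time_ge)
next
  case (Suc n)
  then have "0 \<le> sigma_time a \<phi> n" by (meson order_trans)
  then show ?case unfolding sigma_time_Suc tau_time_Suc by (meson first_time_ge order_trans)
qed

lemma sigma_time_nonneg: "0 \<le> sigma_time a \<phi> n"
  using stopping_times_nonneg by (meson order_trans)

definition run_inf :: "(real \<Rightarrow> real) \<Rightarrow> real \<Rightarrow> real \<Rightarrow> real" where
  "run_inf \<phi> s t = (INF u\<in>{s..t}. \<phi> u)"

lemma run_inf_le:
  assumes "\<phi> \<in> Dplus" and "0 \<le> s" and "s \<le> u" and "u \<le> t"
  shows "run_inf \<phi> s t \<le> \<phi> u"
proof -
  have "bdd_below (\<phi> ` {s..t})"
    using assms(1,2) unfolding Dplus_def by (intro bdd_belowI2[of _ 0]) auto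
  then show ?thesis unfolding run_inf_def using assms(3,4) by (intro cINF_lower) auto
qed

lemma run_inf_greatest:
  assumes "s \<le> t" and "\<And>u. s \<le> u \<Longrightarrow> u \<le> t \<Longrightarrow> c \<le> \<phi> u"
  shows "c \<le> run_inf \<phi> s t"
  unfolding run_inf_def using assms by (intro cINF_greatest) auto

lemma run_inf_antimono:
  assumes "\<phi> \<in> Dplus" and "0 \<le> s" and "s \<le> p" and "p \<le> r" and "r \<le> t"
  shows "run_inf \<phi> s t \<le> run_inf \<phi> p r"
  using assms by (intro run_inf_greatest run_inf_le) auto

lemma tau_time_Suc_real:
  assumes "sigma_time a \<phi> j = ereal r"
  shows "tau_time a \<phi> (Suc j) = first_time (ereal r) (\<lambda>u. \<phi> u \<le> (SUP s\<in>{r..u}. \<phi> s) - a)"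
proof -
  have "{s. ereal r \<le> ereal s \<and> s \<le> u} = {r..u}" for u by auto
  then show ?thesis unfolding tau_time_Suc assms by simp
qed

lemma sigma_time_Suc_real:
  assumes "tau_time a \<phi> (Suc i) = ereal p"
  shows "sigma_time a \<phi> (Suc i) = first_time (ereal p) (\<lambda>u. run_inf \<phi> p u \<le> \<phi> u - a)"
proof -
  have "{v. ereal p \<le> ereal v \<and> v \<le> u} = {p..u}" for u by auto
  then show ?thesis unfolding sigma_time_Suc assms run_inf_def by (simp add: algebra_simps)
qed

lemma below_level_before_sigma_0:
  assumes "0 \<le> s" and "ereal s < sigma_time a \<phi> 0"
  shows "\<phi> s < a"
  using not_before_first_time[of 0 s] assms unfolding sigma_time_0 by fastforce

lemma excess_before_tau:
  assumes "\<phi> \<in> Dplus" and r: "sigma_time a \<phi> j = ereal r"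
    and "r \<le> s" and "s \<le> u" and "ereal u < tau_time a \<phi> (Suc j)"
  shows "\<phi> s - a < \<phi> u"
proof -
  have "0 \<le> r" using sigma_time_nonneg[of a \<phi> j] r by simp
  have "\<not> \<phi> u \<le> (SUP s\<in>{r..u}. \<phi> s) - a"
    using not_before_first_time[of "ereal r" u] assms(3-5) \<open>0 \<le> r\<close>
    unfolding tau_time_Suc_real[OF r] by simp
  moreover have "\<phi> s \<le> (SUP s\<in>{r..u}. \<phi> s)"
    using Dplus_bdd_above[OF assms(1) \<open>0 \<le> r\<close>] assms(3,4) by (intro cSUP_upper) auto
  ultimately show ?thesis by linarith
qed

(* At a finite time sigma_{i+1} the defining condition holds: the infimum of phi over
   [tau_{i+1}, sigma_{i+1}] is at most phi(sigma_{i+1}) - a.  This is where right continuity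
   and a > 0 enter. *)
lemma sigma_time_Suc_attained:
  assumes "a > 0" and "\<phi> \<in> Dplus"
    and p: "tau_time a \<phi> (Suc i) = ereal p" and r: "sigma_time a \<phi> (Suc i) = ereal r"
  shows "run_inf \<phi> p r \<le> \<phi> r - a"
proof -
  define Q where "Q = (\<lambda>u. run_inf \<phi> p u \<le> \<phi> u - a)"
  have "0 \<le> p" "p \<le> r"
    using stopping_times_nonneg[of a \<phi> "Suc i"] p r by auto
  have "Q r"
  proof (rule first_time_attained)
    show "first_time (ereal p) Q = ereal r"
      using r unfolding sigma_time_Suc_real[OF p] Q_def .
    assume "\<not> Q r"
    then have gap: "\<phi> r - a < run_inf \<phi> p r" unfolding Q_def by simp
    define e where "e = min (run_inf \<phi> p r - (\<phi> r - a)) a / 2"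
    have "e > 0" using gap \<open>a > 0\<close> unfolding e_def by simp
    have "(\<phi> \<longlongrightarrow> \<phi> r) (at_right r)"
      using assms(2) \<open>0 \<le> p\<close> \<open>p \<le> r\<close> unfolding Dplus_def by (simp add: continuous_within)
    then have "eventually (\<lambda>v. dist (\<phi> v) (\<phi> r) < e) (at_right r)"
      using \<open>e > 0\<close> by (rule tendstoD)
    then obtain b where "b > r" and close: "\<And>v. r < v \<Longrightarrow> v < b \<Longrightarrow> \<bar>\<phi> v - \<phi> r\<bar> < e"
      unfolding eventually_at_right_field dist_real_def by blast
    have "\<not> Q u" if "r < u" "u < b" for u
    proof -
      have "min (run_inf \<phi> p r) (\<phi> r - e) \<le> run_inf \<phi> p u"
      proof (rule run_inf_greatest)
        fix v assume "p \<le> v" "v \<le> u"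
        then show "min (run_inf \<phi> p r) (\<phi> r - e) \<le> \<phi> v"
          using run_inf_le[OF assms(2) \<open>0 \<le> p\<close>, of v r] close[of v] that
          by (cases "v \<le> r") auto
      qed (use \<open>p \<le> r\<close> that in simp)
      moreover have "\<phi> u - a < min (run_inf \<phi> p r) (\<phi> r - e)"
      proof -
        have "e \<le> (run_inf \<phi> p r - (\<phi> r - a)) / 2" "e \<le> a / 2" unfolding e_def by auto
        then show ?thesis using close[OF that] by (simp add: abs_less_iff)
      qed
      ultimately show ?thesis unfolding Q_def by (meson less_le_trans not_le)
    qed
    then show "eventually (\<lambda>u. \<not> Q u) (at_right r)"
      unfolding eventually_at_right_field using \<open>b > r\<close> by blast
  qed (use \<open>0 \<le> p\<close> in simp)
  then show ?thesis unfolding Q_def .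
qed

(* For sigma_j <= s <= t < tau_{j+1} the summand of C^phi(t) at s is just (phi(s) - a)^+,
   because phi stays above phi(s) - a (and above 0) on [s,t]. *)
lemma summand_eq_excess_before_tau:
  assumes "\<phi> \<in> Dplus" and r: "sigma_time a \<phi> j = ereal r"
    and "r \<le> s" and "s \<le> t" and t: "ereal t < tau_time a \<phi> (Suc j)"
  shows "min (max (\<phi> s - a) 0) (run_inf \<phi> s t) = max (\<phi> s - a) 0"
proof -
  have "0 \<le> r" using sigma_time_nonneg[of a \<phi> j] r by simp
  have "max (\<phi> s - a) 0 \<le> run_inf \<phi> s t"
  proof (rule run_inf_greatest[OF \<open>s \<le> t\<close>])
    fix u assume "s \<le> u" "u \<le> t"
    then have "ereal u < tau_time a \<phi> (Suc j)" using t by (meson ereal_less_eq(3) le_less_trans)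
    then have "\<phi> s - a < \<phi> u" using excess_before_tau[OF assms(1) r] \<open>r \<le> s\<close> \<open>s \<le> u\<close> by blast
    moreover have "0 \<le> \<phi> u" using assms(1) \<open>0 \<le> r\<close> \<open>r \<le> s\<close> \<open>s \<le> u\<close> unfolding Dplus_def by auto
    ultimately show "max (\<phi> s - a) 0 \<le> \<phi> u" by simp
  qed
  then show ?thesis by simp
qed

(* For j = 0
   they vanish; for j > 0 they are bounded by the infimum of phi over [tau_j, sigma_j], which
   is at most phi(sigma_j) - a. *)
lemma summand_le_excess_at_sigma:
  assumes "a > 0" and "\<phi> \<in> Dplus" and r: "sigma_time a \<phi> j = ereal r"
    and "0 \<le> s" and "s < r" and "r \<le> t"
  shows "min (max (\<phi> s - a) 0) (run_inf \<phi> s t) \<le> max (\<phi> r - a) 0"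
proof (cases j)
  case 0
  then have "\<phi> s < a" using below_level_before_sigma_0[of s a \<phi>] assms(4,5) r by simp
  then show ?thesis by simp
next
  case (Suc i)
  obtain p where p: "tau_time a \<phi> (Suc i) = ereal p"
    using stopping_times_nonneg[of a \<phi> "Suc i"] r Suc by (cases "tau_time a \<phi> (Suc i)") auto
  have "0 \<le> p" "p \<le> r" using stopping_times_nonneg[of a \<phi> "Suc i"] p r Suc by auto
  have attained: "run_inf \<phi> p r \<le> \<phi> r - a"
    using sigma_time_Suc_attained[OF assms(1,2) p] r Suc by simp
  have "min (max (\<phi> s - a) 0) (run_inf \<phi> s t) \<le> max 0 (run_inf \<phi> p r)"
  proof (cases "s < p")
    case True
    then have "run_inf \<phi> s t \<le> run_inf \<phi> p r"
      using run_inf_antimono[OF assms(2,4)] \<open>p \<le> r\<close> \<open>r \<le> t\<close> by simp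
    then show ?thesis by simp
  next
    case False
    have "ereal s < sigma_time a \<phi> (Suc i)" using r Suc \<open>s < r\<close> by simp
    then have below: "\<phi> s - a < run_inf \<phi> p s"
      using not_before_first_time[of "ereal p" s] False \<open>0 \<le> p\<close>
      unfolding sigma_time_Suc_real[OF p] by fastforce
    have "min (\<phi> s - a) (run_inf \<phi> s t) \<le> run_inf \<phi> p r"
    proof (rule run_inf_greatest[OF \<open>p \<le> r\<close>])
      fix u assume "p \<le> u" "u \<le> r"
      show "min (\<phi> s - a) (run_inf \<phi> s t) \<le> \<phi> u"
      proof (cases "u \<le> s")
        case True
        then have "run_inf \<phi> p s \<le> \<phi> u" using run_inf_le[OF assms(2) \<open>0 \<le> p\<close> \<open>p \<le> u\<close>] by simp
        then show ?thesis using below by simp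
      next
        case False
        then show ?thesis using run_inf_le[OF assms(2,4), of u t] \<open>u \<le> r\<close> \<open>r \<le> t\<close> by simp
      qed
    qed
    then show ?thesis by linarith
  qed
  then show ?thesis using attained by linarith
qed

lemma cSUP_eq_on_subset:
  fixes f g :: "'a \<Rightarrow> 'b::conditionally_complete_linorder"
  assumes "B \<subseteq> A" and "B \<noteq> {}" and bdd: "bdd_above (g ` B)"
    and eq: "\<And>x. x \<in> B \<Longrightarrow> f x = g x"
    and dominated: "\<And>x. x \<in> A \<Longrightarrow> x \<notin> B \<Longrightarrow> \<exists>y\<in>B. f x \<le> g y"
  shows "(SUP x\<in>A. f x) = (SUP x\<in>B. g x)"
proof -
  have bound: "f x \<le> (SUP y\<in>B. g y)" if "x \<in> A" for x
  proof (cases "x \<in> B")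
    case True
    then show ?thesis using eq[OF True] by (simp add: cSUP_upper[OF _ bdd])
  next
    case False
    then obtain y where "y \<in> B" "f x \<le> g y" using dominated \<open>x \<in> A\<close> by blast
    then show ?thesis by (simp add: cSUP_upper2[OF bdd])
  qed
  have "bdd_above (f ` A)" using bound by (intro bdd_aboveI2)
  have "(SUP x\<in>A. f x) \<le> (SUP x\<in>B. g x)"
    using \<open>B \<subseteq> A\<close> \<open>B \<noteq> {}\<close> bound by (intro cSUP_least) auto
  moreover have "(SUP x\<in>B. g x) \<le> (SUP x\<in>A. f x)"
    using \<open>B \<noteq> {}\<close> \<open>B \<subseteq> A\<close> eq \<open>bdd_above (f ` A)\<close>
    by (intro cSUP_least) (auto intro: cSUP_upper2)
  ultimately show ?thesis by (rule antisym)
qed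

lemma excess_bdd_above:
  assumes "\<phi> \<in> Dplus" and "0 \<le> c"
  shows "bdd_above ((\<lambda>s. max (\<phi> s - a) 0) ` {c..d})"
proof -
  obtain M where "\<And>s. s \<in> {c..d} \<Longrightarrow> \<phi> s \<le> M"
    using Dplus_bdd_above[OF assms] unfolding bdd_above_def by blast
  then show ?thesis by (intro bdd_aboveI2[of _ _ "max (M - a) 0"]) fastforce
qed

theorem proposition3p2:
  fixes a :: real and \<phi> :: "real \<Rightarrow> real" and k :: nat and t :: real
  assumes "a > 0" and "\<phi> \<in> Dplus" and "k \<ge> 1"
    and "sigma_time a \<phi> (k - 1) \<le> ereal t" and "ereal t < tau_time a \<phi> k"
  shows "Cphi a \<phi> t = (SUP s\<in>{s. sigma_time a \<phi> (k - 1) \<le> ereal s \<and> s \<le> t}. max (\<phi> s - a) 0)"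
proof -
  obtain j where k: "k = Suc j" using assms(3) by (cases k) auto
  obtain r where r: "sigma_time a \<phi> j = ereal r"
    using sigma_time_nonneg[of a \<phi> j] assms(4) k by (cases "sigma_time a \<phi> j") auto
  have "0 \<le> r" "r \<le> t" using sigma_time_nonneg[of a \<phi> j] assms(4) k r by auto
  have tail: "{s. sigma_time a \<phi> (k - 1) \<le> ereal s \<and> s \<le> t} = {r..t}" using k r by auto
  have "Cphi a \<phi> t = (SUP s\<in>{0..t}. min (max (\<phi> s - a) 0) (run_inf \<phi> s t))"
    by (simp add: Cphi_def run_inf_def)
  also have "\<dots> = (SUP s\<in>{r..t}. max (\<phi> s - a) 0)"
  proof (rule cSUP_eq_on_subset)
    show "bdd_above ((\<lambda>s. max (\<phi> s - a) 0) ` {r..t})"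
      using excess_bdd_above[OF assms(2) \<open>0 \<le> r\<close>] .
    show "min (max (\<phi> s - a) 0) (run_inf \<phi> s t) = max (\<phi> s - a) 0" if "s \<in> {r..t}" for s
      using summand_eq_excess_before_tau[OF assms(2) r] that assms(5) k by simp
    show "\<exists>y\<in>{r..t}. min (max (\<phi> s - a) 0) (run_inf \<phi> s t) \<le> max (\<phi> y - a) 0"
      if "s \<in> {0..t}" "s \<notin> {r..t}" for s
      using summand_le_excess_at_sigma[OF assms(1,2) r, of s t] that \<open>r \<le> t\<close> by force
  qed (use \<open>0 \<le> r\<close> \<open>r \<le> t\<close> in auto)
  finally show ?thesis unfolding tail .
qed

end
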